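(* Let $H\ge 2$ and let $\mathcal C=\{\boldsymbol g^1,\dots,\boldsymbol g^K\}\subset\mathcal G$ be a codebook containing the true goal $\boldsymbol g^*=\boldsymbol g^{k^*}$. Let the observed action trajectory $\boldsymbol a_{0:H-1}=\boldsymbol a^j_{0:H-1}$ be generated by agent $j$ under $\boldsymbol g^*$, i.e. there are beliefs $\boldsymbol b^j_0,\dots,\boldsymbol b^j_{H-1}\in\mathbb R^{d_b}$ with $\boldsymbol b^j_{t+1}=\mathcal D^j(\boldsymbol b^j_t,\boldsymbol a_t,\boldsymbol g^* )$ and $\boldsymbol a_{t+1}=\pi^j(\boldsymbol b^j_{t+1},\boldsymbol g^* )$ for $t=0,\dots,H-2$. Assume that $\pi(\cdot,\boldsymbol g)$ is $\xi_\pi$-Lipschitz in $\boldsymbol b$ and $\mathcal D(\cdot,\boldsymbol a,\boldsymbol g)$ is $\xi_{\mathcal D}$-Lipschitz in $\boldsymbol b$. Define for $t=0,\dots,H-2$ the mismatches $\Delta\boldsymbol b^j_t:=\Omega(\boldsymbol a_t,\boldsymbol g^* )-\boldsymbol b^j_t$, $\Delta\mathcal D_t(\boldsymbol b):=\mathcal D(\boldsymbol b,\boldsymbol a_t,\boldsymbol g^* )-\mathcal D^j(\boldsymbol b,\boldsymbol a_t,\boldsymbol g^* )$, $\Delta\pi_{t+1}:=\pi^j(\boldsymbol b^j_{t+1},\boldsymbol g^* )-\pi(\boldsymbol b^j_{t+1},\boldsymbol g^* )$, $\varepsilon_t:=\|\Delta\mathcal D_t(\boldsymbol b^j_t)\|+\xi_{\mathcal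 D}\|\Delta\boldsymbol b^j_t\|$, and the behavioral-mismatch energy $$\delta_{\mathrm{act}}:=\Big(\sum_{t=0}^{H-2}\big(\|\Delta\pi_{t+1}\|+\xi_\pi\|\varepsilon_t\|\big)^2\Big)^{1/2}.$$ If $\delta_{\mathrm{act}}<\bar\gamma_H(\mathcal C;\boldsymbol g^* )/2$, then the nearest-neighbor estimator $\hat k=\arg\min_k\|\Phi_H(\boldsymbol g^k)\|_2$ returns $\hat{\boldsymbol g}=\boldsymbol g^{\hat k}=\boldsymbol g^*$.
   Context: Actions lie in $\mathbb R^{d_a}$, beliefs in $\mathbb R^{d_b}$, goals in a set $\mathcal G\subseteq\mathbb R^{d_g}$. The (ego) agent has continuously differentiable models: an inverse belief predictor $\Omega:\mathbb R^{d_a}\times\mathcal G\to\mathbb R^{d_b}$, a forward dynamics model $\mathcal D:\mathbb R^{d_b}\times\mathbb R^{d_a}\times\mathcal G\to\mathbb R^{d_b}$, and a policy $\pi:\mathbb R^{d_b}\times\mathcal G\to\mathbb R^{d_a}$. The observed agent $j$ has its own dynamics $\mathcal D^j$ and policy $\pi^j$ of the same types. Given the trajectory $\boldsymbol a_{0:H-1}$ and a candidate goal $\boldsymbol g\in\mathcal G$, set $F_{\boldsymbol g}(\boldsymbol a):=\pi\big(\mathcal D(\Omega(\boldsymbol a,\boldsymbol g),\boldsymbol a,\boldsymbol g),\boldsymbol g\big)$, the one-step residual $\phi_t(\boldsymbol g):=\boldsymbol a_{t+1}-F_{\boldsymbol g}(\boldsymbol a_t)$, the stacked residual $\Phi_H(\boldsymbol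 g):=[\phi_0(\boldsymbol g);\phi_1(\boldsymbol g);\dots;\phi_{H-2}(\boldsymbol g)]\in\mathbb R^{(H-1)d_a}$, and $d_H(\boldsymbol g):=\|\Phi_H(\boldsymbol g)\|_2$. For a codebook $\mathcal C=\{\boldsymbol g^1,\dots,\boldsymbol g^K\}$ with $\boldsymbol g^*=\boldsymbol g^{k^*}$, the residual margin is $\bar\gamma_H(\mathcal C;\boldsymbol g^* ):=\min_{k\ne k^*}\|\Phi_H(\boldsymbol g^k)-\Phi_H(\boldsymbol g^* )\|_2$. *)

theory Defs
  imports "HOL-Analysis.Analysis"
begin

text \<open>Actions in 'a, beliefs in 'b, goals in 'g (arbitrary Euclidean spaces).
  Omega: inverse belief predictor; Dyn: forward dynamics; Pol: policy.\<close>

definition F_map ::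
  "('a::euclidean_space \<Rightarrow> 'g::euclidean_space \<Rightarrow> 'b::euclidean_space)
   \<Rightarrow> ('b \<Rightarrow> 'a \<Rightarrow> 'g \<Rightarrow> 'b) \<Rightarrow> ('b \<Rightarrow> 'g \<Rightarrow> 'a) \<Rightarrow> 'g \<Rightarrow> 'a \<Rightarrow> 'a" where
  "F_map Omega Dyn Pol g a = Pol (Dyn (Omega a g) a g) g"

definition resid ::
  "('a::euclidean_space \<Rightarrow> 'g::euclidean_space \<Rightarrow> 'b::euclidean_space)
   \<Rightarrow> ('b \<Rightarrow> 'a \<Rightarrow> 'g \<Rightarrow> 'b) \<Rightarrow> ('b \<Rightarrow> 'g \<Rightarrow> 'a) \<Rightarrow> (nat \<Rightarrow> 'a) \<Rightarrow> 'g \<Rightarrow> nat \<Rightarrow> 'a" where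
  "resid Omega Dyn Pol acts g t = acts (Suc t) - F_map Omega Dyn Pol g (acts t)"

text \<open>Stacked residual Phi_H(g) = [phi_0(g); ...; phi_{H-2}(g)], represented as the
  block-indexed family t \<mapsto> phi_t(g), t < H-1. Its Euclidean 2-norm is the
  L2 norm over the blocks.\<close>
definition stack_norm :: "nat \<Rightarrow> (nat \<Rightarrow> 'a::euclidean_space) \<Rightarrow> real" where
  "stack_norm H v = L2_set (\<lambda>t. norm (v t)) {..<H - 1}"

definition d_H ::
  "nat \<Rightarrow> ('a::euclidean_space \<Rightarrow> 'g::euclidean_space \<Rightarrow> 'b::euclidean_space)
   \<Rightarrow> ('b \<Rightarrow> 'a \<Rightarrow> 'g \<Rightarrow> 'b) \<Rightarrow> ('b \<Rightarrow> 'g \<Rightarrow> 'a) \<Rightarrow> (nat \<Rightarrow> 'a) \<Rightarrow> 'g \<Rightarrow> real" where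
  "d_H H Omega Dyn Pol acts g = stack_norm H (resid Omega Dyn Pol acts g)"

text \<open>Residual margin min_{k \<noteq> k*} ||Phi_H(g^k) - Phi_H(g^*)||_2 of the codebook
  {cb 0, ..., cb (K-1)}; as an extended real, equal to +\<infinity> if K = 1.\<close>
definition resid_margin ::
  "nat \<Rightarrow> ('a::euclidean_space \<Rightarrow> 'g::euclidean_space \<Rightarrow> 'b::euclidean_space)
   \<Rightarrow> ('b \<Rightarrow> 'a \<Rightarrow> 'g \<Rightarrow> 'b) \<Rightarrow> ('b \<Rightarrow> 'g \<Rightarrow> 'a) \<Rightarrow> (nat \<Rightarrow> 'a)
   \<Rightarrow> nat \<Rightarrow> (nat \<Rightarrow> 'g) \<Rightarrow> nat \<Rightarrow> ereal" where
  "resid_margin H Omega Dyn Pol acts K cb kstar =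
     (INF k \<in> {k. k < K \<and> k \<noteq> kstar}.
        ereal (stack_norm H (\<lambda>t. resid Omega Dyn Pol acts (cb k) t
                               - resid Omega Dyn Pol acts (cb kstar) t)))"

end

theory Submission
  imports Defs
begin

text \<open>At the true goal the residual only measures how far the ego models are from agent
  j's: one step of the observed dynamics differs from the predicted step by the policy
  mismatch plus, through the Lipschitz constants, the dynamics and belief mismatches, so
  that \<open>d_H\<close> at the true goal is at most \<open>\<delta>_act\<close>. By the triangle inequality for the
  stacked norm, every other codeword has residual norm at least
  \<open>\<gamma> - \<delta>_act > \<delta>_act\<close>, so the minimiser is the true goal.\<close>

lemma F_map_deviation_le:
  assumes lip_pi: "xi_pi-lipschitz_on UNIV (\<lambda>b. Pol b g)"
    and lip_D: "xi_D-lipschitz_on UNIV (\<lambda>b. Dyn b a g)"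
    and b': "b' = Dj b a g"
  shows "norm (Pj b' g - F_map Omega Dyn Pol g a)
           \<le> norm (Pj b' g - Pol b' g)
             + xi_pi * (norm (Dyn b a g - Dj b a g) + xi_D * norm (Omega a g - b))"
proof -
  let ?c = "Dyn (Omega a g) a g"
  have "norm (Dyn b a g - ?c) \<le> xi_D * norm (Omega a g - b)"
    using lipschitz_on_normD[OF lip_D] by (simp add: norm_minus_commute)
  then have "norm (b' - ?c) \<le> norm (Dyn b a g - Dj b a g) + xi_D * norm (Omega a g - b)"
    unfolding b' by (rule norm_diff_triangle_le[OF eq_refl, OF norm_minus_commute])
  then have "norm (Pol b' g - Pol ?c g)
               \<le> xi_pi * (norm (Dyn b a g - Dj b a g) + xi_D * norm (Omega a g - b))"
    using lipschitz_on_normD[OF lip_pi, of b' ?c] lipschitz_on_nonneg[OF lip_pi]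
    by (meson UNIV_I mult_left_mono order_trans)
  then show ?thesis
    unfolding F_map_def by (rule norm_diff_triangle_le[OF order_refl])
qed

lemma stack_norm_diff_le: "stack_norm H (\<lambda>t. u t - v t) \<le> stack_norm H u + stack_norm H v"
proof -
  have "stack_norm H (\<lambda>t. u t - v t) \<le> L2_set (\<lambda>t. norm (u t) + norm (v t)) {..<H - 1}"
    unfolding stack_norm_def by (rule L2_set_mono) (auto intro: norm_triangle_ineq4)
  also have "\<dots> \<le> stack_norm H u + stack_norm H v"
    unfolding stack_norm_def by (rule L2_set_triangle_ineq)
  finally show ?thesis .
qed

lemma resid_margin_le:
  assumes "k < K" "k \<noteq> kstar"
  shows "resid_margin H Omega Dyn Pol acts K cb kstar
           \<le> ereal (stack_norm H (\<lambda>t. resid Omega Dyn Pol acts (cb k) t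
                                    - resid Omega Dyn Pol acts (cb kstar) t))"
  unfolding resid_margin_def by (rule INF_lower) (use assms in auto)

lemma is_arg_min_d_H_eq_true_goal:
  assumes kstar: "kstar < K"
    and small: "ereal (d_H H Omega Dyn Pol acts (cb kstar))
                  < resid_margin H Omega Dyn Pol acts K cb kstar / 2"
    and khat: "is_arg_min (\<lambda>k. d_H H Omega Dyn Pol acts (cb k)) (\<lambda>k. k < K) khat"
  shows "khat = kstar"
proof (rule ccontr)
  assume ne: "khat \<noteq> kstar"
  let ?d = "\<lambda>k. d_H H Omega Dyn Pol acts (cb k)"
  define m where "m = stack_norm H (\<lambda>t. resid Omega Dyn Pol acts (cb khat) t
                                       - resid Omega Dyn Pol acts (cb kstar) t)"
  have khat_K: "khat < K" and khat_min: "?d khat \<le> ?d kstar"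
    using khat kstar unfolding is_arg_min_def by (meson not_less)+
  have "resid_margin H Omega Dyn Pol acts K cb kstar / 2 \<le> ereal m / 2"
    by (rule ereal_divide_right_mono) (use resid_margin_le[OF khat_K ne] m_def in auto)
  with small have "ereal (?d kstar) < ereal m / 2"
    by (rule order_less_le_trans)
  then have "?d kstar < m / 2"
    by simp
  moreover have "m \<le> ?d khat + ?d kstar"
    unfolding m_def d_H_def by (rule stack_norm_diff_le)
  ultimately show False
    using khat_min by linarith
qed

theorem theorem5p3:
  fixes Omega :: "'a::euclidean_space \<Rightarrow> 'g::euclidean_space \<Rightarrow> 'b::euclidean_space"
    and Dyn :: "'b \<Rightarrow> 'a \<Rightarrow> 'g \<Rightarrow> 'b" and Pol :: "'b \<Rightarrow> 'g \<Rightarrow> 'a"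
    and Dj :: "'b \<Rightarrow> 'a \<Rightarrow> 'g \<Rightarrow> 'b" and Pj :: "'b \<Rightarrow> 'g \<Rightarrow> 'a"
    and G :: "'g set" and H K kstar :: nat and cb :: "nat \<Rightarrow> 'g"
    and acts :: "nat \<Rightarrow> 'a" and bj :: "nat \<Rightarrow> 'b"
    and xi_pi xi_D :: real
  assumes H: "H \<ge> 2"
    and cb_G: "\<forall>k<K. cb k \<in> G"
    and cb_inj: "inj_on cb {..<K}"
    and kstar: "kstar < K"
    and gen: "\<forall>t<H - 1. bj (Suc t) = Dj (bj t) (acts t) (cb kstar)
                        \<and> acts (Suc t) = Pj (bj (Suc t)) (cb kstar)"
    and lip_pi: "\<forall>g\<in>G. xi_pi-lipschitz_on UNIV (\<lambda>b. Pol b g)"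
    and lip_D: "\<forall>a. \<forall>g\<in>G. xi_D-lipschitz_on UNIV (\<lambda>b. Dyn b a g)"
    and small: "ereal (sqrt (\<Sum>t<H - 1.
                  (norm (Pj (bj (Suc t)) (cb kstar) - Pol (bj (Suc t)) (cb kstar))
                   + xi_pi * \<bar>norm (Dyn (bj t) (acts t) (cb kstar) - Dj (bj t) (acts t) (cb kstar))
                              + xi_D * norm (Omega (acts t) (cb kstar) - bj t)\<bar>)\<^sup>2))
                < resid_margin H Omega Dyn Pol acts K cb kstar / 2"
  shows "\<forall>khat. is_arg_min (\<lambda>k. d_H H Omega Dyn Pol acts (cb k)) (\<lambda>k. k < K) khat
                 \<longrightarrow> cb khat = cb kstar"
proof -
  let ?g = "cb kstar"
  define e where "e t = norm (Pj (bj (Suc t)) ?g - Pol (bj (Suc t)) ?g)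
                   + xi_pi * \<bar>norm (Dyn (bj t) (acts t) ?g - Dj (bj t) (acts t) ?g)
                              + xi_D * norm (Omega (acts t) ?g - bj t)\<bar>" for t
  have lip_pi_g: "xi_pi-lipschitz_on UNIV (\<lambda>b. Pol b ?g)"
    using lip_pi cb_G kstar by blast
  have "norm (resid Omega Dyn Pol acts ?g t) \<le> e t" if "t < H - 1" for t
  proof -
    have "norm (resid Omega Dyn Pol acts ?g t)
            \<le> norm (Pj (bj (Suc t)) ?g - Pol (bj (Suc t)) ?g)
              + xi_pi * (norm (Dyn (bj t) (acts t) ?g - Dj (bj t) (acts t) ?g)
                         + xi_D * norm (Omega (acts t) ?g - bj t))"
      unfolding resid_def using gen that cb_G kstar lip_D lip_pi_g
      by (auto intro!: F_map_deviation_le[where Pol = Pol and g = ?g and Dyn = Dyn and a = "acts t"])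
    also have "\<dots> \<le> e t"
      unfolding e_def using lipschitz_on_nonneg[OF lip_pi_g] by (simp add: mult_left_mono)
    finally show ?thesis .
  qed
  then have "d_H H Omega Dyn Pol acts ?g \<le> sqrt (\<Sum>t<H - 1. (e t)\<^sup>2)"
    unfolding d_H_def stack_norm_def L2_set_def[symmetric] by (intro L2_set_mono) auto
  with small have "ereal (d_H H Omega Dyn Pol acts ?g)
                     < resid_margin H Omega Dyn Pol acts K cb kstar / 2"
    unfolding e_def by (meson ereal_less_eq(3) order_le_less_trans)
  with kstar show ?thesis
    using is_arg_min_d_H_eq_true_goal by blast
qed

end
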